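(* Let $f_\Theta$ be a prior probability density on $\mathbb{R}$ with finite mean $\theta_0=\int\theta f_\Theta(\theta)d\theta$. Let $l_\epsilon,l_1,\dots,l_k$ be probability densities on $\mathbb{R}$, $\Delta_1,\dots,\Delta_k\in\mathbb{R}$, and weights $\phi_\epsilon,\phi_1,\dots,\phi_k\in[0,1]$ with $\phi_\epsilon+\sum_{i=1}^k\phi_i=1$ and $\phi_\epsilon>0$. Consider the mixture signal likelihood $$l_{X|\Theta}(x\mid\theta)=\phi_\epsilon\,l_\epsilon(x-\theta)+\sum_{i=1}^k\phi_i\,l_i(x-\Delta_i).$$ Fix $x$ with $J_0(x)=\int f_\Theta(\theta)l_\epsilon(x-\theta)d\theta\in(0,\infty)$ and $\int|\theta| f_\Theta(\theta)l_\epsilon(x-\theta)d\theta<\infty$. Let $\theta_1=\frac{\int\theta f_\Theta(\theta)l_{X|\Theta}(x\mid\theta)d\theta}{\int f_\Theta(\theta)l_{X|\Theta}(x\mid\theta)d\theta}$ be the posterior mean and $\theta_1^{nm}=\frac{\int\theta f_\Theta(\theta)l_\epsilon(x-\theta)d\theta}{J_0(x)}$ the posterior mean under the non-mixture signal with likelihood $l_\epsilon(x-\theta)$. Then $$\theta_1=\alpha(x)\,\theta_1^{nm}+(1-\alpha(x))\,\theta_0,\qquad \alpha(x)=\Bigl(1+\sum_{i=1}^k\frac{\phi_i}{\phi_\epsilon}\frac{l_i(x-\Delta_i)}{J_0(x)}\Bigr)^{-1}\in[0,1].$$ *)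

theory Defs
  imports "HOL-Analysis.Analysis"
begin

definition prob_density :: "(real \<Rightarrow> real) \<Rightarrow> bool" where
  "prob_density g \<longleftrightarrow> g \<in> borel_measurable borel \<and> (\<forall>x. 0 \<le> g x) \<and>
     (\<integral>\<^sup>+ x. ennreal (g x) \<partial>lborel) = 1"

definition mixture_lik ::
  "nat \<Rightarrow> real \<Rightarrow> (real \<Rightarrow> real) \<Rightarrow> (nat \<Rightarrow> real) \<Rightarrow> (nat \<Rightarrow> real \<Rightarrow> real) \<Rightarrow> (nat \<Rightarrow> real)
    \<Rightarrow> real \<Rightarrow> real \<Rightarrow> real" where
  "mixture_lik k phi_e l_e phi l Delta x \<theta> =
     phi_e * l_e (x - \<theta>) + (\<Sum>i=1..k. phi i * l i (x - Delta i))"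

end

theory Submission
  imports Defs
begin

text \<open>Only the first component of the mixture likelihood depends on \<open>\<theta>\<close>; the others contribute
  a constant \<open>c = \<Sum>i. \<phi>\<^sub>i l\<^sub>i(x - \<Delta>\<^sub>i) \<ge> 0\<close>. Integrating against the prior, the numerator
  of the posterior mean becomes \<open>\<phi>\<^sub>\<epsilon> A + c \<theta>\<^sub>0\<close> and the denominator \<open>\<phi>\<^sub>\<epsilon> J\<^sub>0 + c\<close>, where \<open>A / J\<^sub>0\<close> is
  the non-mixture posterior mean. Such a ratio is the convex combination of \<open>A / J\<^sub>0\<close> and \<open>\<theta>\<^sub>0\<close>
  with weight \<open>\<alpha> = \<phi>\<^sub>\<epsilon> J\<^sub>0 / (\<phi>\<^sub>\<epsilon> J\<^sub>0 + c)\<close>.\<close>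

lemma prob_density_integrable: "prob_density g \<Longrightarrow> integrable lborel g"
  unfolding prob_density_def by (intro integrableI_nonneg) auto

lemma integral_prob_density: "prob_density g \<Longrightarrow> (\<integral>t. g t \<partial>lborel) = 1"
  unfolding prob_density_def by (simp add: integral_eq_nn_integral)

lemma prob_density_reflect_measurable:
  "prob_density g \<Longrightarrow> (\<lambda>t. g (x - t)) \<in> borel_measurable borel"
  unfolding prob_density_def by (auto intro: measurable_compose[where f = "\<lambda>t. x - t"])

lemma integral_pos_if_nn_integral_pos:
  fixes u :: "'a \<Rightarrow> real"
  assumes "u \<in> borel_measurable M" "\<And>t. 0 \<le> u t"
    and "(\<integral>\<^sup>+ t. ennreal (u t) \<partial>M) > 0" "(\<integral>\<^sup>+ t. ennreal (u t) \<partial>M) < \<infinity>"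
  shows "(\<integral>t. u t \<partial>M) > 0"
  using assms by (simp add: integral_eq_nn_integral enn2real_positive_iff)

lemma ratio_eq_convex_combination:
  fixes w J c a m :: real
  assumes "w > 0" "J > 0" "c \<ge> 0"
  defines "\<alpha> \<equiv> inverse (1 + c / (w * J))"
  shows "(w * a + c * m) / (w * J + c) = \<alpha> * (a / J) + (1 - \<alpha>) * m \<and> 0 \<le> \<alpha> \<and> \<alpha> \<le> 1"
proof -
  have wJ: "w * J > 0" using assms by simp
  then have "1 + c / (w * J) = (w * J + c) / (w * J)"
    using assms by (simp add: add_divide_distrib)
  then have \<alpha>_eq: "\<alpha> = w * J / (w * J + c)"
    unfolding \<alpha>_def by simp
  have "\<alpha> * (a / J) = w * a / (w * J + c)"
    unfolding \<alpha>_eq using \<open>J > 0\<close> by (simp add: field_simps)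
  moreover have "(1 - \<alpha>) * m = c * m / (w * J + c)"
    unfolding \<alpha>_eq using wJ \<open>c \<ge> 0\<close> by (simp add: field_simps)
  moreover have "0 \<le> \<alpha> \<and> \<alpha> \<le> 1"
    unfolding \<alpha>_eq using wJ \<open>c \<ge> 0\<close> by simp
  ultimately show ?thesis
    by (simp add: add_divide_distrib)
qed

lemma posterior_mean_affine_likelihood:
  fixes h g :: "real \<Rightarrow> real" and w c :: real
  assumes "integrable M h" "integrable M (\<lambda>t. t * h t)"
    and "integrable M (\<lambda>t. h t * g t)" "integrable M (\<lambda>t. t * h t * g t)"
    and "(\<integral>t. h t \<partial>M) = 1" "(\<integral>t. h t * g t \<partial>M) > 0"
    and "w > 0" "c \<ge> 0"
  defines "\<alpha> \<equiv> inverse (1 + c / (w * (\<integral>t. h t * g t \<partial>M)))"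
  shows "(\<integral>t. t * h t * (w * g t + c) \<partial>M) / (\<integral>t. h t * (w * g t + c) \<partial>M)
      = \<alpha> * ((\<integral>t. t * h t * g t \<partial>M) / (\<integral>t. h t * g t \<partial>M)) + (1 - \<alpha>) * (\<integral>t. t * h t \<partial>M)
    \<and> 0 \<le> \<alpha> \<and> \<alpha> \<le> 1"
proof -
  have "(\<integral>t. t * h t * (w * g t + c) \<partial>M) = (\<integral>t. w * (t * h t * g t) + c * (t * h t) \<partial>M)"
    by (simp add: algebra_simps)
  also have "\<dots> = w * (\<integral>t. t * h t * g t \<partial>M) + c * (\<integral>t. t * h t \<partial>M)"
    using assms by simp
  finally have numerator: "(\<integral>t. t * h t * (w * g t + c) \<partial>M)
      = w * (\<integral>t. t * h t * g t \<partial>M) + c * (\<integral>t. t * h t \<partial>M)" .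
  have "(\<integral>t. h t * (w * g t + c) \<partial>M) = (\<integral>t. w * (h t * g t) + c * h t \<partial>M)"
    by (simp add: algebra_simps)
  also have "\<dots> = w * (\<integral>t. h t * g t \<partial>M) + c"
    using assms by simp
  finally show ?thesis
    unfolding numerator \<alpha>_def using assms by (simp add: ratio_eq_convex_combination)
qed

theorem mainTheorem9:
  fixes f l_e :: "real \<Rightarrow> real" and l :: "nat \<Rightarrow> real \<Rightarrow> real"
    and Delta phi :: "nat \<Rightarrow> real" and phi_e x :: real and k :: nat
  assumes prior: "prob_density f"
    and mean: "integrable lborel (\<lambda>\<theta>. \<theta> * f \<theta>)"
    and le_dens: "prob_density l_e"
    and l_dens: "\<And>i. i \<in> {1..k} \<Longrightarrow> prob_density (l i)"
    and phi_e_range: "0 \<le> phi_e" "phi_e \<le> 1"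
    and phi_range: "\<And>i. i \<in> {1..k} \<Longrightarrow> 0 \<le> phi i \<and> phi i \<le> 1"
    and phi_sum: "phi_e + (\<Sum>i=1..k. phi i) = 1"
    and phi_e_pos: "phi_e > 0"
    and J0_pos: "(\<integral>\<^sup>+ \<theta>. ennreal (f \<theta> * l_e (x - \<theta>)) \<partial>lborel) > 0"
    and J0_fin: "(\<integral>\<^sup>+ \<theta>. ennreal (f \<theta> * l_e (x - \<theta>)) \<partial>lborel) < \<infinity>"
    and abs_fin: "(\<integral>\<^sup>+ \<theta>. ennreal (\<bar>\<theta>\<bar> * f \<theta> * l_e (x - \<theta>)) \<partial>lborel) < \<infinity>"
  defines "\<theta>0 \<equiv> (\<integral>\<theta>. \<theta> * f \<theta> \<partial>lborel)"
    and "\<theta>1 \<equiv> (\<integral>\<theta>. \<theta> * f \<theta> * mixture_lik k phi_e l_e phi l Delta x \<theta> \<partial>lborel)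
              / (\<integral>\<theta>. f \<theta> * mixture_lik k phi_e l_e phi l Delta x \<theta> \<partial>lborel)"
    and "\<theta>1nm \<equiv> (\<integral>\<theta>. \<theta> * f \<theta> * l_e (x - \<theta>) \<partial>lborel) / (\<integral>\<theta>. f \<theta> * l_e (x - \<theta>) \<partial>lborel)"
    and "\<alpha> \<equiv> inverse (1 + (\<Sum>i=1..k. (phi i / phi_e) * (l i (x - Delta i) / (\<integral>\<theta>. f \<theta> * l_e (x - \<theta>) \<partial>lborel))))"
  shows "\<theta>1 = \<alpha> * \<theta>1nm + (1 - \<alpha>) * \<theta>0 \<and> 0 \<le> \<alpha> \<and> \<alpha> \<le> 1"
proof -
  define J where "J = (\<integral>\<theta>. f \<theta> * l_e (x - \<theta>) \<partial>lborel)"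
  define c where "c = (\<Sum>i=1..k. phi i * l i (x - Delta i))"
  have nonneg: "\<And>t. 0 \<le> f t" "\<And>t. 0 \<le> l_e t"
    using prior le_dens unfolding prob_density_def by auto
  have "f \<in> borel_measurable borel"
    using prior unfolding prob_density_def by simp
  then have meas: "(\<lambda>t. f t * l_e (x - t)) \<in> borel_measurable lborel"
    using prob_density_reflect_measurable[OF le_dens, of x] by simp
  have J_int: "integrable lborel (\<lambda>t. f t * l_e (x - t))"
    using meas J0_fin nonneg by (intro integrableI_nonneg) auto
  have "integrable lborel (\<lambda>t. t * f t * l_e (x - t))"
  proof (rule integrableI_bounded)
    show "(\<lambda>t. t * f t * l_e (x - t)) \<in> borel_measurable lborel"
      using meas by (simp add: mult.assoc)
    show "(\<integral>\<^sup>+ t. ennreal (norm (t * f t * l_e (x - t))) \<partial>lborel) < \<infinity>"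
      using abs_fin nonneg by (simp add: abs_mult)
  qed
  moreover have "J > 0"
    unfolding J_def using meas nonneg J0_pos J0_fin by (intro integral_pos_if_nn_integral_pos) auto
  moreover have "c \<ge> 0"
    unfolding c_def using phi_range l_dens unfolding prob_density_def by (intro sum_nonneg) auto
  moreover have "\<alpha> = inverse (1 + c / (phi_e * J))"
    unfolding \<alpha>_def J_def[symmetric] c_def by (simp add: sum_divide_distrib)
  moreover have "mixture_lik k phi_e l_e phi l Delta x = (\<lambda>t. phi_e * l_e (x - t) + c)"
    unfolding mixture_lik_def c_def by simp
  ultimately show ?thesis
    unfolding \<theta>0_def \<theta>1_def \<theta>1nm_def J_def
    using posterior_mean_affine_likelihood[of lborel f "\<lambda>t. l_e (x - t)" phi_e c]
      prob_density_integrable[OF prior] integral_prob_density[OF prior] mean J_int phi_e_pos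
    by simp
qed

end
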